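(* Let $H$, $d$, $(X,\mu)$, $\mathcal{A}$, $(N_s)$, $\delta_r,s_r,\sigma_s$ be as in the context and fix an integer $r\ge3$. Fix $0\le\alpha<\beta$ and an integer $s>s_r+r$. Then for any partition $\mathcal{Q}$ of $[r]$, any $\underline h\in\Delta_{\mathcal{Q}}(\alpha,\beta)$ and any $f\in\mathcal{A}$, $$|\psi_{f,\underline h}(I)-\psi^{\mathcal{Q}}_{f,\underline h}(I)|\le C_{r,s}\,e^{-(\beta\delta_r-r\alpha\sigma_s)}N_s(f)^{|I|}\quad\text{for all }I\subset[r],$$ where $C_{r,s}$ depends only on $r$ and $s$.
   Context: $H$ is a locally compact second countable group with left-invariant metric $d$, acting measure-preservingly on a probability space $(X,\mu)$; $h\cdot f=f\circ h^{-1}$. $\mathcal{A}\subset L^\infty(X,\mu)$ is an $H$-invariant subalgebra and $(N_s)_{s\ge1}$ seminorms on it with (constants depending only on $s$): $N_s(f)\ll N_{s+1}(f)$; $\|f\|_{L^\infty}\ll N_s(f)$; $N_s(h\cdot f)\ll e^{\sigma_s d(h,e)}N_s(f)$ for some $\sigma_s>0$; $N_s(f_1f_2)\ll N_{s+1}(f_1)N_{s+1}(f_2)$. Exponential mixing of all orders: for every $k\ge2$ there are $\delta_k>0$ and an integer $s_k>0$ with $\big|\mu(\prod_{i=1}^k h_i\cdot f_i)-\prod_i\mu(f_i)\big|\ll_{k,s}e^{-\delta_k\min_{i\ne j}d(h_i,h_j)}\prod_iN_s(f_i)$ for all $s>s_k$, $f_i\in\mathcal{A}$, $h_i\in H$;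 $(\sigma_s)$, $(s_k)$ increasing, $(\delta_k)$ decreasing, $\delta_k<k\sigma_s$. Distances: $d^I(\underline h)=\max_{i,j\in I}d(h_i,h_j)$, $d_{I,J}(\underline h)=\min_{i\in I,j\in J}d(h_i,h_j)$, $d^{\mathcal{Q}}=\max_{I\in\mathcal{Q}}d^I$, $d_{\mathcal{Q}}=\min\{d_{I,J}:I\ne J\in\mathcal{Q}\}$, $\Delta_{\mathcal{Q}}(\alpha,\beta)=\{\underline h\in H^r:d^{\mathcal{Q}}(\underline h)\le\alpha,\ d_{\mathcal{Q}}(\underline h)>\beta\}$. For $f\in\mathcal{A}$, $\underline h\in H^r$: $\psi_{f,\underline h}(I)=\mu(\prod_{i\in I}h_i\cdot f)$ for $I\ne\emptyset$, $\psi_{f,\underline h}(\emptyset)=1$, and $\psi^{\mathcal{Q}}_{f,\underline h}(I)=\prod_{J\in\mathcal{Q}}\psi_{f,\underline h}(I\cap J)$. *)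

theory Defs
  imports "HOL-Probability.Probability" "HOL-Library.Disjoint_Sets"
begin

text \<open>Group H: a type of class group_add (not necessarily commutative; + is the group law,
  0 the identity e, uminus the inverse), d = dist.  Index set [r] = {1..r}.
  Tuples in H^r are functions nat => 'h of which only indices 1..r are used.\<close>

definition hact :: "('h::group_add \<Rightarrow> 'x \<Rightarrow> 'x) \<Rightarrow> 'h \<Rightarrow> ('x \<Rightarrow> real) \<Rightarrow> ('x \<Rightarrow> real)" where
  "hact act g f = (\<lambda>x. f (act (- g) x))"

definition dup :: "nat set \<Rightarrow> (nat \<Rightarrow> 'h::metric_space) \<Rightarrow> real" where
  "dup I h = Max {dist (h i) (h j) | i j. i \<in> I \<and> j \<in> I}"

definition dlow :: "nat set \<Rightarrow> nat set \<Rightarrow> (nat \<Rightarrow> 'h::metric_space) \<Rightarrow> real" where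
  "dlow I J h = Min {dist (h i) (h j) | i j. i \<in> I \<and> j \<in> J}"

definition dupQ :: "nat set set \<Rightarrow> (nat \<Rightarrow> 'h::metric_space) \<Rightarrow> real" where
  "dupQ Q h = Max ((\<lambda>I. dup I h) ` Q)"

text \<open>d_Q(h) = min { d_{I,J}(h) : I \<noteq> J in Q }, with value +infinity (as an extended real)
  when Q has only one block (minimum over the empty set).\<close>
definition dlowQ :: "nat set set \<Rightarrow> (nat \<Rightarrow> 'h::metric_space) \<Rightarrow> ereal" where
  "dlowQ Q h = (INF IJ \<in> {(I, J). I \<in> Q \<and> J \<in> Q \<and> I \<noteq> J}. ereal (dlow (fst IJ) (snd IJ) h))"

definition DeltaQ :: "nat set set \<Rightarrow> real \<Rightarrow> real \<Rightarrow> (nat \<Rightarrow> 'h::metric_space) set" where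
  "DeltaQ Q \<alpha> \<beta> = {h. dupQ Q h \<le> \<alpha> \<and> dlowQ Q h > ereal \<beta>}"

definition psi :: "'x measure \<Rightarrow> ('h::group_add \<Rightarrow> 'x \<Rightarrow> 'x) \<Rightarrow> ('x \<Rightarrow> real)
    \<Rightarrow> (nat \<Rightarrow> 'h) \<Rightarrow> nat set \<Rightarrow> real" where
  "psi M act f h I = (if I = {} then 1
      else (\<integral>x. (\<Prod>i\<in>I. hact act (h i) f x) \<partial>M))"

definition psiQ :: "'x measure \<Rightarrow> ('h::group_add \<Rightarrow> 'x \<Rightarrow> 'x) \<Rightarrow> ('x \<Rightarrow> real)
    \<Rightarrow> (nat \<Rightarrow> 'h) \<Rightarrow> nat set set \<Rightarrow> nat set \<Rightarrow> real" where
  "psiQ M act f h Q I = (\<Prod>J\<in>Q. psi M act f h (I \<inter> J))"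

end

theory Submission
  imports Defs
begin

(* Split I along the blocks of Q that it meets, I = B_1 u ... u B_k, and pick a point j_i in each
   B_i. Writing F_i for the product of the translates (h_(j_i))^-1 h_l . f over l in B_i, the
   integrand of psi(I) is the product of the h_(j_i) . F_i, while mu(F_i) = psi(B_i) by invariance
   of mu; so psi(I) - psi^Q(I) is exactly a k-fold mixing defect. The points h_(j_i) lie in
   different blocks, hence are beta-separated, and mixing of order k <= r bounds the defect by
   exp(-delta_k beta) times the product of the N_t(F_i). Each F_i is a product of at most r
   translates by elements of size at most alpha, so the product and translation estimates for the
   seminorms give N_t(F_i) <= (C exp(sigma_s alpha) N_s(f))^|B_i|, and the exponents add up to |I|. *)

lemma le_max_0_mult:
  fixes a b C :: real
  assumes "a \<le> C * b" "0 \<le> b"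
  shows "a \<le> max C 0 * b"
  using assms mult_right_mono[OF max.cobounded1[of C 0] assms(2)] by linarith

lemma ex_common_constant:
  fixes Q :: "'k \<Rightarrow> real \<Rightarrow> bool"
  assumes "finite K"
    and "\<And>k. k \<in> K \<Longrightarrow> \<exists>C. Q k C"
    and "\<And>k C C'. k \<in> K \<Longrightarrow> Q k C \<Longrightarrow> C \<le> C' \<Longrightarrow> Q k C'"
  shows "\<exists>C\<ge>0. \<forall>k\<in>K. Q k C"
proof -
  obtain C where C: "\<And>k. k \<in> K \<Longrightarrow> Q k (C k)"
    using assms(2) by metis
  have "Q k (Max (insert 0 (C ` K)))" if "k \<in> K" for k
    using assms(1,3) C that by (meson Max_ge finite_imageI finite_insert image_eqI insertCI)
  then show ?thesis
    using assms(1) by (intro exI[of _ "Max (insert 0 (C ` K))"]) auto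
qed

locale graded_seminorms =
  fixes A :: "('x \<Rightarrow> real) set" and N :: "nat \<Rightarrow> ('x \<Rightarrow> real) \<Rightarrow> real"
  assumes mult_mem: "\<And>f g. f \<in> A \<Longrightarrow> g \<in> A \<Longrightarrow> (\<lambda>x. f x * g x) \<in> A"
    and N_nonneg: "\<And>s f. 1 \<le> s \<Longrightarrow> f \<in> A \<Longrightarrow> 0 \<le> N s f"
    and N_mono: "\<And>s. 1 \<le> s \<Longrightarrow> \<exists>C. \<forall>f\<in>A. N s f \<le> C * N (s + 1) f"
    and N_mult: "\<And>s. 1 \<le> s \<Longrightarrow> \<exists>C. \<forall>f1\<in>A. \<forall>f2\<in>A.
      N s (\<lambda>x. f1 x * f2 x) \<le> C * N (s + 1) f1 * N (s + 1) f2"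
begin

lemma prod_mem:
  assumes "finite S" "S \<noteq> {}" "\<And>i. i \<in> S \<Longrightarrow> g i \<in> A"
  shows "(\<lambda>x. \<Prod>i\<in>S. g i x) \<in> A"
  using assms
proof (induction S rule: finite_ne_induct)
  case (singleton a)
  then show ?case by simp
next
  case (insert a S)
  then show ?case using mult_mem[of "g a" "\<lambda>x. \<Prod>i\<in>S. g i x"] by simp
qed

lemma N_le_N_higher:
  assumes "1 \<le> t" "t \<le> u"
  shows "\<exists>C\<ge>0. \<forall>f\<in>A. N t f \<le> C * N u f"
  using assms(2)
proof (induction u rule: dec_induct)
  case base
  show ?case by (intro exI[of _ 1]) simp
next
  case (step u)
  then obtain C where C: "C \<ge> 0" "\<forall>f\<in>A. N t f \<le> C * N u f"
    by blast
  obtain C' where C': "\<forall>f\<in>A. N u f \<le> C' * N (Suc u) f"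
    using N_mono[of u] assms(1) step(1) by auto
  have "N t f \<le> (C * max C' 0) * N (Suc u) f" if "f \<in> A" for f
  proof -
    have "N u f \<le> max C' 0 * N (Suc u) f"
      using C' that N_nonneg[of "Suc u" f] by (intro le_max_0_mult) auto
    then show ?thesis
      using C that by (metis mult.assoc mult_left_mono order_trans)
  qed
  then show ?case
    using C(1) by (intro exI[of _ "C * max C' 0"]) auto
qed

lemma N_mult_le:
  assumes "1 \<le> t"
  shows "\<exists>C\<ge>0. \<forall>f\<in>A. \<forall>g\<in>A. N t (\<lambda>x. f x * g x) \<le> C * N (t + 1) f * N (t + 1) g"
proof -
  obtain C where C: "\<forall>f\<in>A. \<forall>g\<in>A. N t (\<lambda>x. f x * g x) \<le> C * N (t + 1) f * N (t + 1) g"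
    using N_mult assms by blast
  have "N t (\<lambda>x. f x * g x) \<le> max C 0 * (N (t + 1) f * N (t + 1) g)" if "f \<in> A" "g \<in> A" for f g
    using C that N_nonneg[of "t + 1"] by (intro le_max_0_mult) (auto simp: mult.assoc)
  then show ?thesis
    by (intro exI[of _ "max C 0"]) (auto simp: mult.assoc)
qed

definition N_prod_bound :: "nat \<Rightarrow> nat \<Rightarrow> real \<Rightarrow> bool" where
  "N_prod_bound t m K \<longleftrightarrow> (\<forall>(S::nat set) g. finite S \<longrightarrow> S \<noteq> {} \<longrightarrow> card S \<le> Suc m \<longrightarrow> (\<forall>i\<in>S. g i \<in> A) \<longrightarrow>
     N t (\<lambda>x. \<Prod>i\<in>S. g i x) \<le> K * (\<Prod>i\<in>S. N (t + m) (g i)))"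

lemma N_prod_bound_0: "N_prod_bound t 0 1"
  unfolding N_prod_bound_def
proof (intro allI impI)
  fix S :: "nat set" and g :: "nat \<Rightarrow> 'x \<Rightarrow> real"
  assume "finite S" "S \<noteq> {}" "card S \<le> Suc 0"
  then obtain a where "S = {a}"
    by (metis card_1_singletonE card_gt_0_iff le_antisym Suc_leI One_nat_def)
  then show "N t (\<lambda>x. \<Prod>i\<in>S. g i x) \<le> 1 * (\<Prod>i\<in>S. N (t + 0) (g i))"
    by simp
qed

lemma N_prod_bound_Suc:
  assumes "1 \<le> t" "N_prod_bound (t + 1) m K" "0 \<le> K"
  shows "\<exists>K'\<ge>0. N_prod_bound t (Suc m) K'"
proof -
  obtain Cm where Cm: "Cm \<ge> 0"
    "\<forall>f\<in>A. \<forall>g\<in>A. N t (\<lambda>x. f x * g x) \<le> Cm * N (t + 1) f * N (t + 1) g"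
    using N_mult_le assms(1) by blast
  obtain C0 where C0: "C0 \<ge> 0" "\<forall>f\<in>A. N t f \<le> C0 * N (t + Suc m) f"
    using N_le_N_higher assms(1) by (metis le_add1)
  obtain C1 where C1: "C1 \<ge> 0" "\<forall>f\<in>A. N (t + 1) f \<le> C1 * N (t + Suc m) f"
    using N_le_N_higher[of "t + 1" "t + Suc m"] by auto
  define K' where "K' = max C0 (Cm * C1 * K)"
  have "N t (\<lambda>x. \<Prod>i\<in>S. g i x) \<le> K' * (\<Prod>i\<in>S. N (t + Suc m) (g i))"
    if S: "finite S" "S \<noteq> {}" "card S \<le> Suc (Suc m)" and g: "\<forall>i\<in>S. g i \<in> A" for S :: "nat set" and g
  proof -
    have nonneg: "0 \<le> (\<Prod>i\<in>S. N (t + Suc m) (g i))"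
      using g N_nonneg by (intro prod_nonneg) auto
    obtain a where "a \<in> S"
      using S(2) by blast
    define S' where "S' = S - {a}"
    have aS': "S = insert a S'" "a \<notin> S'"
      using \<open>a \<in> S\<close> by (auto simp: S'_def)
    show ?thesis
    proof (cases "S' = {}")
      case True
      have "N t (g a) \<le> C0 * N (t + Suc m) (g a)"
        using C0 g aS' by simp
      also have "\<dots> \<le> K' * N (t + Suc m) (g a)"
        using N_nonneg[of "t + Suc m" "g a"] g aS' by (intro mult_right_mono) (auto simp: K'_def)
      finally show ?thesis
        using True aS' by simp
    next
      case False
      have ga: "g a \<in> A" and gS': "\<forall>i\<in>S'. g i \<in> A" and fin: "finite S'"
        using g S(1) aS' by auto
      have PA: "(\<lambda>x. \<Prod>i\<in>S'. g i x) \<in> A"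
        using prod_mem[OF fin False] gS' by simp
      have "N t (\<lambda>x. \<Prod>i\<in>S. g i x) = N t (\<lambda>x. g a x * (\<Prod>i\<in>S'. g i x))"
        using aS' fin by simp
      also have "\<dots> \<le> Cm * N (t + 1) (g a) * N (t + 1) (\<lambda>x. \<Prod>i\<in>S'. g i x)"
        by (rule Cm(2)[rule_format, OF ga PA])
      also have "\<dots> \<le> Cm * (C1 * N (t + Suc m) (g a)) * (K * (\<Prod>i\<in>S'. N (t + Suc m) (g i)))"
      proof (intro mult_mono mult_left_mono)
        show "N (t + 1) (g a) \<le> C1 * N (t + Suc m) (g a)"
          using C1 ga by blast
        have "card S' \<le> Suc m"
          using S(3) aS' fin by simp
        then show "N (t + 1) (\<lambda>x. \<Prod>i\<in>S'. g i x) \<le> K * (\<Prod>i\<in>S'. N (t + Suc m) (g i))"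
          using assms(2) fin False gS' unfolding N_prod_bound_def by simp
      qed (use Cm(1) C1(1) ga PA N_nonneg[of "t + 1"] N_nonneg[of "t + Suc m"] in auto)
      also have "\<dots> = (Cm * C1 * K) * (\<Prod>i\<in>S. N (t + Suc m) (g i))"
        using aS' fin by (simp add: mult_ac)
      also have "\<dots> \<le> K' * (\<Prod>i\<in>S. N (t + Suc m) (g i))"
        using nonneg by (intro mult_right_mono) (auto simp: K'_def)
      finally show ?thesis .
    qed
  qed
  then show ?thesis
    using C0(1) unfolding N_prod_bound_def by (intro exI[of _ K']) (auto simp: K'_def)
qed

lemma ex_N_prod_bound: "1 \<le> t \<Longrightarrow> \<exists>K\<ge>0. N_prod_bound t m K"
proof (induction m arbitrary: t)
  case 0
  then show ?case
    using N_prod_bound_0 by (intro exI[of _ 1]) simp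
next
  case (Suc m)
  then obtain K where "K \<ge> 0" "N_prod_bound (t + 1) m K"
    by (metis le_add1 add.commute)
  then show ?case
    using N_prod_bound_Suc Suc.prems by blast
qed

end

locale translation_seminorms = graded_seminorms A N
  for A :: "('x \<Rightarrow> real) set" and N :: "nat \<Rightarrow> ('x \<Rightarrow> real) \<Rightarrow> real" +
  fixes act :: "'h::{group_add, metric_space} \<Rightarrow> 'x \<Rightarrow> 'x" and \<sigma> :: "nat \<Rightarrow> real"
  assumes hact_mem: "\<And>g f. f \<in> A \<Longrightarrow> hact act g f \<in> A"
    and \<sigma>_pos: "\<And>s. 1 \<le> s \<Longrightarrow> 0 < \<sigma> s"
    and \<sigma>_mono: "\<And>s t. 1 \<le> s \<Longrightarrow> s \<le> t \<Longrightarrow> \<sigma> s \<le> \<sigma> t"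
    and N_hact: "\<And>s. 1 \<le> s \<Longrightarrow> \<exists>C. \<forall>f\<in>A. \<forall>g.
      N s (hact act g f) \<le> C * exp (\<sigma> s * dist g 0) * N s f"
begin

lemma N_hact_le:
  assumes "1 \<le> u" "u \<le> s"
  shows "\<exists>C\<ge>0. \<forall>f\<in>A. \<forall>g \<alpha>. dist g 0 \<le> \<alpha> \<longrightarrow>
           N u (hact act g f) \<le> C * exp (\<sigma> s * \<alpha>) * N s f"
proof -
  obtain Ca where Ca: "\<forall>f\<in>A. \<forall>g. N u (hact act g f) \<le> Ca * exp (\<sigma> u * dist g 0) * N u f"
    using N_hact assms(1) by blast
  obtain Cm where Cm: "Cm \<ge> 0" "\<forall>f\<in>A. N u f \<le> Cm * N s f"
    using N_le_N_higher assms by blast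
  have "N u (hact act g f) \<le> (max Ca 0 * Cm) * exp (\<sigma> s * \<alpha>) * N s f"
    if f: "f \<in> A" and g: "dist g 0 \<le> \<alpha>" for f g \<alpha>
  proof -
    have "\<sigma> u * dist g 0 \<le> \<sigma> s * \<alpha>"
      using \<sigma>_pos[OF assms(1)] \<sigma>_mono[OF assms] g by (intro mult_mono) auto
    then have exp_le: "exp (\<sigma> u * dist g 0) \<le> exp (\<sigma> s * \<alpha>)"
      by simp
    have "N u (hact act g f) \<le> max Ca 0 * (exp (\<sigma> u * dist g 0) * N u f)"
      using Ca f N_nonneg[OF assms(1) f] by (intro le_max_0_mult) (auto simp: mult.assoc)
    also have "\<dots> \<le> max Ca 0 * (exp (\<sigma> s * \<alpha>) * (Cm * N s f))"
      using exp_le Cm f N_nonneg[OF assms(1) f] by (intro mult_left_mono mult_mono) auto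
    finally show ?thesis
      by (simp add: mult_ac)
  qed
  then show ?thesis
    using Cm(1) by (intro exI[of _ "max Ca 0 * Cm"]) auto
qed

lemma N_prod_hact_le:
  assumes "1 \<le> t" "t + m \<le> s"
  shows "\<exists>C\<ge>1. \<forall>(S::nat set) c f \<alpha>. finite S \<longrightarrow> S \<noteq> {} \<longrightarrow> card S \<le> Suc m \<longrightarrow> f \<in> A \<longrightarrow>
           (\<forall>i\<in>S. dist (c i) 0 \<le> \<alpha>) \<longrightarrow>
           N t (\<lambda>x. \<Prod>i\<in>S. hact act (c i) f x) \<le> (C * exp (\<sigma> s * \<alpha>) * N s f) ^ card S"
proof -
  obtain K where K: "K \<ge> 0" "N_prod_bound t m K"
    using ex_N_prod_bound assms(1) by blast
  obtain Ch where Ch: "Ch \<ge> 0" "\<forall>f\<in>A. \<forall>g \<alpha>. dist g 0 \<le> \<alpha> \<longrightarrow>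
      N (t + m) (hact act g f) \<le> Ch * exp (\<sigma> s * \<alpha>) * N s f"
    using N_hact_le[of "t + m" s] assms by auto
  define C where "C = max 1 K * max 1 Ch"
  have "N t (\<lambda>x. \<Prod>i\<in>S. hact act (c i) f x) \<le> (C * exp (\<sigma> s * \<alpha>) * N s f) ^ card S"
    if S: "finite S" "S \<noteq> {}" "card S \<le> Suc m" and f: "f \<in> A"
      and c: "\<forall>i\<in>S. dist (c i) 0 \<le> \<alpha>" for S :: "nat set" and c f \<alpha>
  proof -
    define Y where "Y = exp (\<sigma> s * \<alpha>) * N s f"
    have Y: "0 \<le> Y"
      using N_nonneg f assms by (simp add: Y_def)
    have n: "1 \<le> card S"
      using S by (simp add: Suc_le_eq card_gt_0_iff)
    have "\<forall>i\<in>S. hact act (c i) f \<in> A"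
      using hact_mem f by blast
    then have "N t (\<lambda>x. \<Prod>i\<in>S. hact act (c i) f x) \<le> K * (\<Prod>i\<in>S. N (t + m) (hact act (c i) f))"
      using K(2)[unfolded N_prod_bound_def, rule_format, of S "\<lambda>i. hact act (c i) f"] S by simp
    also have "\<dots> \<le> K * (\<Prod>i\<in>S. Ch * Y)"
    proof (intro mult_left_mono prod_mono conjI)
      fix i assume "i \<in> S"
      show "0 \<le> N (t + m) (hact act (c i) f)"
        using N_nonneg[OF _ hact_mem[OF f]] assms(1) by simp
      show "N (t + m) (hact act (c i) f) \<le> Ch * Y"
        using Ch(2) f c \<open>i \<in> S\<close> by (simp add: Y_def mult.assoc)
    qed (use K(1) in simp)
    also have "\<dots> = K * (Ch * Y) ^ card S"
      by simp
    also have "\<dots> \<le> max 1 K ^ card S * (max 1 Ch * Y) ^ card S"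
    proof (rule mult_mono)
      have "K \<le> max 1 K ^ 1"
        by simp
      also have "\<dots> \<le> max 1 K ^ card S"
        using n by (intro power_increasing) auto
      finally show "K \<le> max 1 K ^ card S" .
      show "(Ch * Y) ^ card S \<le> (max 1 Ch * Y) ^ card S"
        using Ch(1) Y by (intro power_mono mult_right_mono) auto
    qed (use Y Ch(1) in auto)
    also have "\<dots> = (C * exp (\<sigma> s * \<alpha>) * N s f) ^ card S"
      by (simp add: C_def Y_def power_mult_distrib mult_ac)
    finally show ?thesis .
  qed
  moreover have "1 \<le> C"
    unfolding C_def by (rule order_trans[OF _ mult_mono[of 1 "max 1 K" 1 "max 1 Ch"]]) auto
  ultimately show ?thesis by blast
qed

end

lemma partition_on_block:
  assumes "partition_on I P" "finite I" "B \<in> P"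
  shows "finite B" "B \<noteq> {}"
  using assms by (auto simp: partition_on_def intro: finite_subset)

lemma partition_on_enumeration:
  assumes "partition_on I P" "finite I"
  obtains e r where "bij_betw e {1..card P} P" "\<And>i. i \<in> {1..card P} \<Longrightarrow> r i \<in> e i"
proof -
  obtain e where e: "bij_betw e {1..card P} P"
    using ex_bij_betw_nat_finite_1 finite_elements[OF assms(2,1)] by blast
  have "\<forall>i\<in>{1..card P}. \<exists>j. j \<in> e i"
    using bij_betw_apply[OF e] partition_on_block(2)[OF assms] by blast
  then obtain r where "\<And>i. i \<in> {1..card P} \<Longrightarrow> r i \<in> e i"
    by metis
  with e show ?thesis
    using that by blast
qed

lemma card_partition_on_le:
  assumes "partition_on I P" "finite I"
  shows "card P \<le> card I"
proof -
  note blocks = partition_on_block[OF assms]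
  have "card P = (\<Sum>B\<in>P. 1)"
    by simp
  also have "\<dots> \<le> (\<Sum>B\<in>P. card B)"
    using blocks by (intro sum_mono) (simp add: Suc_le_eq card_gt_0_iff)
  also have "\<dots> = card I"
    using product_partition[OF assms(1)] blocks by simp
  finally show ?thesis .
qed

lemma Min_pairwise_dist_gt:
  fixes hs :: "nat \<Rightarrow> 'a::metric_space"
  assumes "2 \<le> k" "\<And>i j. i \<in> {1..k} \<Longrightarrow> j \<in> {1..k} \<Longrightarrow> i \<noteq> j \<Longrightarrow> \<beta> < dist (hs i) (hs j)"
  shows "\<beta> < Min {dist (hs i) (hs j) | i j. i \<in> {1..k} \<and> j \<in> {1..k} \<and> i \<noteq> j}"
proof (subst Min_gr_iff)
  show "finite {dist (hs i) (hs j) | i j. i \<in> {1..k} \<and> j \<in> {1..k} \<and> i \<noteq> j}"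
    by (rule finite_subset[of _ "(\<lambda>(i, j). dist (hs i) (hs j)) ` ({1..k} \<times> {1..k})"]) auto
  show "{dist (hs i) (hs j) | i j. i \<in> {1..k} \<and> j \<in> {1..k} \<and> i \<noteq> j} \<noteq> {}"
  proof -
    have "dist (hs 1) (hs 2) \<in> {dist (hs i) (hs j) | i j. i \<in> {1..k} \<and> j \<in> {1..k} \<and> i \<noteq> j}"
      using assms(1) by force
    then show ?thesis
      by blast
  qed
qed (use assms(2) in blast)

lemma DeltaQ_dist_le:
  assumes "h \<in> DeltaQ Q \<alpha> \<beta>" "finite Q" "J \<in> Q" "finite J" "i \<in> J" "j \<in> J"
  shows "dist (h i) (h j) \<le> \<alpha>"
proof -
  have "dist (h i) (h j) \<le> dup J h"
    unfolding dup_def using assms(4-6) by (intro Max_ge finite_image_set2) auto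
  also have "\<dots> \<le> dupQ Q h"
    unfolding dupQ_def using assms(2,3) by (intro Max_ge) auto
  also have "\<dots> \<le> \<alpha>"
    using assms(1) by (simp add: DeltaQ_def)
  finally show ?thesis .
qed

lemma DeltaQ_dist_gt:
  assumes "h \<in> DeltaQ Q \<alpha> \<beta>" "J \<in> Q" "J' \<in> Q" "J \<noteq> J'" "finite J" "finite J'" "i \<in> J" "j \<in> J'"
  shows "\<beta> < dist (h i) (h j)"
proof -
  have "ereal \<beta> < dlowQ Q h"
    using assms(1) by (simp add: DeltaQ_def)
  also have "\<dots> \<le> ereal (dlow J J' h)"
    unfolding dlowQ_def by (rule INF_lower2[of "(J, J')"]) (use assms(2-4) in auto)
  finally have "\<beta> < dlow J J' h"
    by simp
  also have "\<dots> \<le> dist (h i) (h j)"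
    unfolding dlow_def using assms(5-8) by (intro Min_le finite_image_set2) auto
  finally show ?thesis .
qed

lemma DeltaQ_restrict_dist:
  assumes h: "h \<in> DeltaQ Q \<alpha> \<beta>" and Q: "partition_on S Q" "finite S"
  shows "\<And>B i j. B \<in> (\<inter>) I ` Q - {{}} \<Longrightarrow> i \<in> B \<Longrightarrow> j \<in> B \<Longrightarrow> dist (h i) (h j) \<le> \<alpha>"
    and "\<And>B B' i j. B \<in> (\<inter>) I ` Q - {{}} \<Longrightarrow> B' \<in> (\<inter>) I ` Q - {{}} \<Longrightarrow> B \<noteq> B' \<Longrightarrow>
      i \<in> B \<Longrightarrow> j \<in> B' \<Longrightarrow> \<beta> < dist (h i) (h j)"
proof -
  have "finite Q"
    using finite_elements[OF Q(2,1)] .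
  have blocks: "finite J" if "J \<in> Q" for J
    using partition_on_block(1)[OF Q that] .
  show "dist (h i) (h j) \<le> \<alpha>" if B: "B \<in> (\<inter>) I ` Q - {{}}" and "i \<in> B" "j \<in> B" for B i j
  proof -
    obtain J where "J \<in> Q" "B = I \<inter> J"
      using B by blast
    then show ?thesis
      using DeltaQ_dist_le[OF h \<open>finite Q\<close> \<open>J \<in> Q\<close> blocks[OF \<open>J \<in> Q\<close>]] \<open>i \<in> B\<close> \<open>j \<in> B\<close> by blast
  qed
  show "\<beta> < dist (h i) (h j)"
    if BB': "B \<in> (\<inter>) I ` Q - {{}}" "B' \<in> (\<inter>) I ` Q - {{}}" "B \<noteq> B'" and "i \<in> B" "j \<in> B'"
    for B B' i j
  proof -
    obtain J J' where J: "J \<in> Q" "J' \<in> Q" "B = I \<inter> J" "B' = I \<inter> J'"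
      using BB'(1,2) by blast
    then have "J \<noteq> J'"
      using BB'(3) by blast
    then show ?thesis
      using DeltaQ_dist_gt[OF h J(1,2) _ blocks[OF J(1)] blocks[OF J(2)]] J(3,4) \<open>i \<in> B\<close> \<open>j \<in> B'\<close>
      by blast
  qed
qed

lemma psiQ_eq_prod_restrict:
  assumes "partition_on S Q" "finite S"
  shows "psiQ M act f h Q I = (\<Prod>B\<in>(\<inter>) I ` Q - {{}}. psi M act f h B)"
proof -
  have "finite Q"
    using assms finite_elements by blast
  have "(\<Prod>B\<in>(\<inter>) I ` Q - {{}}. psi M act f h B) = (\<Prod>B\<in>(\<inter>) I ` Q. psi M act f h B)"
    using \<open>finite Q\<close> by (intro prod.mono_neutral_left) (auto simp: psi_def)
  also have "\<dots> = (\<Prod>J\<in>Q. psi M act f h (I \<inter> J))"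
  proof (rule prod.reindex_nontrivial[unfolded comp_def, OF \<open>finite Q\<close>])
    fix J J' assume "J \<in> Q" "J' \<in> Q" "J \<noteq> J'" "I \<inter> J = I \<inter> J'"
    then have "I \<inter> J = {}"
      using partition_onD2[OF assms(1)] by (auto simp: disjoint_def)
    then show "psi M act f h (I \<inter> J) = 1"
      by (simp add: psi_def)
  qed
  finally show ?thesis
    by (simp add: psiQ_def)
qed

lemma psi_eq_prod_if_card_le_1:
  assumes "partition_on I P" "finite I" "card P \<le> 1"
  shows "psi M act f h I = (\<Prod>B\<in>P. psi M act f h B)"
proof -
  have "finite P"
    using assms finite_elements by blast
  then consider "P = {}" | B where "P = {B}"
    using assms(3) by (metis card_0_eq card_1_singletonE le_Suc_eq One_nat_def le_zero_eq)
  then show ?thesis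
  proof cases
    case 1
    then show ?thesis
      using partition_onD1[OF assms(1)] by (simp add: psi_def)
  next
    case 2
    then show ?thesis
      using partition_onD1[OF assms(1)] by simp
  qed
qed

definition centred_prod :: "('h::group_add \<Rightarrow> 'x \<Rightarrow> 'x) \<Rightarrow> ('x \<Rightarrow> real) \<Rightarrow> (nat \<Rightarrow> 'h) \<Rightarrow> 'h
    \<Rightarrow> nat set \<Rightarrow> 'x \<Rightarrow> real" where
  "centred_prod act f h g B = (\<lambda>x. \<Prod>i\<in>B. hact act (- g + h i) f x)"

lemma hact_centred_prod:
  assumes "\<And>g g' x. x \<in> space M \<Longrightarrow> act (g + g') x = act g (act g' x)" "x \<in> space M"
  shows "hact act g (centred_prod act f h g B) x = (\<Prod>i\<in>B. hact act (h i) f x)"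
  unfolding centred_prod_def hact_def
  by (simp add: assms(1)[OF assms(2), symmetric] minus_add add.assoc)

lemma integral_hact:
  assumes "act (- g) \<in> measurable M M" "distr M M (act (- g)) = M" "f \<in> borel_measurable M"
  shows "(\<integral>x. hact act g f x \<partial>M) = (\<integral>x. f x \<partial>M)"
proof -
  have "(\<integral>x. f x \<partial>M) = integral\<^sup>L (distr M M (act (- g))) f"
    using assms(2) by simp
  also have "\<dots> = (\<integral>x. f (act (- g) x) \<partial>M)"
    using integral_distr[OF assms(1,3)] .
  finally show ?thesis
    by (simp add: hact_def)
qed

locale exp_mixing_action = translation_seminorms A N act \<sigma>
  for A :: "('x \<Rightarrow> real) set" and N :: "nat \<Rightarrow> ('x \<Rightarrow> real) \<Rightarrow> real"
    and act :: "'h::{group_add, metric_space} \<Rightarrow> 'x \<Rightarrow> 'x" and \<sigma> :: "nat \<Rightarrow> real" +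
  fixes M :: "'x measure" and \<delta> :: "nat \<Rightarrow> real" and sk :: "nat \<Rightarrow> nat"
  assumes dist_left_invariant: "\<And>g x y::'h. dist (g + x) (g + y) = dist x y"
    and act_plus: "\<And>g g' x. x \<in> space M \<Longrightarrow> act (g + g') x = act g (act g' x)"
    and act_preserving: "\<And>g. act g \<in> measurable M M \<and> distr M M (act g) = M"
    and A_measurable: "\<And>f. f \<in> A \<Longrightarrow> f \<in> borel_measurable M"
    and \<delta>_pos: "\<And>k. 2 \<le> k \<Longrightarrow> 0 < \<delta> k"
    and \<delta>_antimono: "\<And>k l. 2 \<le> k \<Longrightarrow> k \<le> l \<Longrightarrow> \<delta> l \<le> \<delta> k"
    and sk_mono: "\<And>k l. 2 \<le> k \<Longrightarrow> k \<le> l \<Longrightarrow> sk k \<le> sk l"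
    and mixing: "\<And>k s. 2 \<le> k \<Longrightarrow> sk k < s \<Longrightarrow> \<exists>C. \<forall>fs hs. (\<forall>i\<in>{1..k}. fs i \<in> A) \<longrightarrow>
      \<bar>(\<integral>x. (\<Prod>i\<in>{1..k}. hact act (hs i) (fs i) x) \<partial>M) - (\<Prod>i\<in>{1..k}. (\<integral>x. fs i x \<partial>M))\<bar>
        \<le> C * exp (- \<delta> k * Min {dist (hs i) (hs j) | i j. i \<in> {1..k} \<and> j \<in> {1..k} \<and> i \<noteq> j})
          * (\<Prod>i\<in>{1..k}. N s (fs i))"
begin

definition mixing_bound :: "nat \<Rightarrow> nat \<Rightarrow> real \<Rightarrow> bool" where
  "mixing_bound k s C \<longleftrightarrow> (\<forall>fs hs. (\<forall>i\<in>{1..k}. fs i \<in> A) \<longrightarrow>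
      \<bar>(\<integral>x. (\<Prod>i\<in>{1..k}. hact act (hs i) (fs i) x) \<partial>M) - (\<Prod>i\<in>{1..k}. (\<integral>x. fs i x \<partial>M))\<bar>
        \<le> C * exp (- \<delta> k * Min {dist (hs i) (hs j) | i j. i \<in> {1..k} \<and> j \<in> {1..k} \<and> i \<noteq> j})
          * (\<Prod>i\<in>{1..k}. N s (fs i)))"

lemma ex_uniform_mixing_bound:
  assumes "sk r < s"
  shows "\<exists>C\<ge>0. \<forall>k\<in>{2..r}. mixing_bound k s C"
proof (rule ex_common_constant)
  fix k assume "k \<in> {2..r}"
  then show "\<exists>C. mixing_bound k s C"
    using mixing[of k s] sk_mono[of k r] assms unfolding mixing_bound_def by auto
next
  fix k C C' assume "k \<in> {2..r}" "mixing_bound k s C" "C \<le> C'"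
  moreover have "0 \<le> exp c * (\<Prod>i\<in>{1..k}. N s (fs i))" if "\<forall>i\<in>{1..k}. fs i \<in> A" for c fs
    using that assms N_nonneg by (intro mult_nonneg_nonneg prod_nonneg) auto
  ultimately show "mixing_bound k s C'"
    unfolding mixing_bound_def mult.assoc by (meson mult_right_mono order_trans)
qed simp

lemma dist_uminus_add_zero: "dist (- g + x) (0::'h) = dist x g"
  using dist_left_invariant[of g "- g + x" 0] by (simp add: add.assoc[symmetric])

lemma centred_prod_mem:
  assumes "finite B" "B \<noteq> {}" "f \<in> A"
  shows "centred_prod act f h g B \<in> A"
  unfolding centred_prod_def using assms by (intro prod_mem hact_mem)

lemma integral_centred_prod:
  assumes "finite B" "B \<noteq> {}" "f \<in> A"
  shows "(\<integral>x. centred_prod act f h g B x \<partial>M) = psi M act f h B"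
proof -
  have "(\<integral>x. centred_prod act f h g B x \<partial>M) = (\<integral>x. hact act g (centred_prod act f h g B) x \<partial>M)"
    using integral_hact act_preserving A_measurable[OF centred_prod_mem[OF assms]] by metis
  also have "\<dots> = (\<integral>x. (\<Prod>i\<in>B. hact act (h i) f x) \<partial>M)"
    by (intro Bochner_Integration.integral_cong refl hact_centred_prod act_plus)
  finally show ?thesis
    using assms(2) by (simp add: psi_def)
qed

lemma integral_prod_hact_centred_prod:
  assumes "partition_on I P" "finite I" "I \<noteq> {}" "bij_betw e {1..k} P"
  shows "(\<integral>x. (\<Prod>i\<in>{1..k}. hact act (c i) (centred_prod act f h (c i) (e i)) x) \<partial>M) = psi M act f h I"
proof -
  have "(\<Prod>i\<in>{1..k}. hact act (c i) (centred_prod act f h (c i) (e i)) x) = (\<Prod>j\<in>I. hact act (h j) f x)"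
    if "x \<in> space M" for x
  proof -
    have "(\<Prod>i\<in>{1..k}. hact act (c i) (centred_prod act f h (c i) (e i)) x)
        = (\<Prod>i\<in>{1..k}. \<Prod>j\<in>e i. hact act (h j) f x)"
      using hact_centred_prod[OF act_plus that] by simp
    also have "\<dots> = (\<Prod>B\<in>P. \<Prod>j\<in>B. hact act (h j) f x)"
      using assms(4) by (rule prod.reindex_bij_betw)
    also have "\<dots> = (\<Prod>j\<in>I. hact act (h j) f x)"
      by (rule prod.partition[OF assms(2,1), symmetric])
    finally show ?thesis .
  qed
  then show ?thesis
    using assms(3) by (simp add: psi_def cong: Bochner_Integration.integral_cong)
qed

lemma prod_integral_centred_prod:
  assumes "partition_on I P" "finite I" "bij_betw e {1..k} P" "f \<in> A"
  shows "(\<Prod>i\<in>{1..k}. \<integral>x. centred_prod act f h (c i) (e i) x \<partial>M) = (\<Prod>B\<in>P. psi M act f h B)"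
proof -
  have "e i \<in> P" if "i \<in> {1..k}" for i
    using assms(3) that by (rule bij_betw_apply)
  then have "(\<Prod>i\<in>{1..k}. \<integral>x. centred_prod act f h (c i) (e i) x \<partial>M) = (\<Prod>i\<in>{1..k}. psi M act f h (e i))"
    using assms partition_on_block[OF assms(1,2)] by (intro prod.cong refl integral_centred_prod) auto
  also have "\<dots> = (\<Prod>B\<in>P. psi M act f h B)"
    using assms(3) by (rule prod.reindex_bij_betw)
  finally show ?thesis .
qed

lemma prod_N_centred_prod_le:
  assumes P: "partition_on I P" "finite I" and e: "bij_betw e {1..k} P" and "f \<in> A" "1 \<le> t"
    and r: "\<And>i. i \<in> {1..k} \<Longrightarrow> r i \<in> e i"
    and within: "\<And>B i j. B \<in> P \<Longrightarrow> i \<in> B \<Longrightarrow> j \<in> B \<Longrightarrow> dist (h i) (h j) \<le> \<alpha>"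
    and block: "\<And>B c. B \<in> P \<Longrightarrow> \<forall>i\<in>B. dist (c i) 0 \<le> \<alpha> \<Longrightarrow>
      N t (\<lambda>x. \<Prod>i\<in>B. hact act (c i) f x) \<le> X ^ card B"
  shows "(\<Prod>i\<in>{1..k}. N t (centred_prod act f h (h (r i)) (e i))) \<le> X ^ card I"
proof -
  have eP: "e i \<in> P" if "i \<in> {1..k}" for i
    using e that by (rule bij_betw_apply)
  have "(\<Prod>i\<in>{1..k}. N t (centred_prod act f h (h (r i)) (e i))) \<le> (\<Prod>i\<in>{1..k}. X ^ card (e i))"
  proof (rule prod_mono)
    fix i assume i: "i \<in> {1..k}"
    have "\<forall>j\<in>e i. dist (- h (r i) + h j) 0 \<le> \<alpha>"
      using within[OF eP[OF i] _ r[OF i]] by (simp add: dist_uminus_add_zero)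
    then show "0 \<le> N t (centred_prod act f h (h (r i)) (e i))
        \<and> N t (centred_prod act f h (h (r i)) (e i)) \<le> X ^ card (e i)"
      using block[OF eP[OF i]] N_nonneg[OF \<open>1 \<le> t\<close> centred_prod_mem] partition_on_block[OF P eP[OF i]]
        \<open>f \<in> A\<close> by (simp add: centred_prod_def)
  qed
  also have "\<dots> = (\<Prod>B\<in>P. X ^ card B)"
    using e by (rule prod.reindex_bij_betw)
  also have "\<dots> = X ^ card I"
    using product_partition[OF P(1)] partition_on_block[OF P] by (simp add: power_sum)
  finally show ?thesis .
qed

lemma psi_sub_prod_psi_le:
  assumes P: "partition_on I P" "finite I" "2 \<le> card P" and f: "f \<in> A" and "1 \<le> t" "0 \<le> \<beta>"
    and E: "mixing_bound (card P) t E" "0 \<le> E"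
    and within: "\<And>B i j. B \<in> P \<Longrightarrow> i \<in> B \<Longrightarrow> j \<in> B \<Longrightarrow> dist (h i) (h j) \<le> \<alpha>"
    and across: "\<And>B B' i j. B \<in> P \<Longrightarrow> B' \<in> P \<Longrightarrow> B \<noteq> B' \<Longrightarrow> i \<in> B \<Longrightarrow> j \<in> B' \<Longrightarrow>
      \<beta> < dist (h i) (h j)"
    and block: "\<And>B c. B \<in> P \<Longrightarrow> \<forall>i\<in>B. dist (c i) 0 \<le> \<alpha> \<Longrightarrow>
      N t (\<lambda>x. \<Prod>i\<in>B. hact act (c i) f x) \<le> X ^ card B"
  shows "\<bar>psi M act f h I - (\<Prod>B\<in>P. psi M act f h B)\<bar> \<le> E * exp (- \<delta> (card P) * \<beta>) * X ^ card I"
proof -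
  define k where "k = card P"
  obtain e r where e: "bij_betw e {1..k} P" and r: "\<And>i. i \<in> {1..k} \<Longrightarrow> r i \<in> e i"
    using partition_on_enumeration[OF P(1,2)] unfolding k_def by blast
  have eP: "e i \<in> P" if "i \<in> {1..k}" for i
    using e that by (rule bij_betw_apply)
  define hs where "hs i = h (r i)" for i
  define fs where "fs i = centred_prod act f h (hs i) (e i)" for i
  have fs: "\<forall>i\<in>{1..k}. fs i \<in> A"
    using eP partition_on_block[OF P(1,2)] f by (simp add: fs_def centred_prod_mem)
  have "I \<noteq> {}"
    using P(3) partition_onD1[OF P(1)] partition_onD3[OF P(1)] by (cases "P = {}") auto
  have sep: "\<beta> < Min {dist (hs i) (hs j) | i j. i \<in> {1..k} \<and> j \<in> {1..k} \<and> i \<noteq> j}"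
  proof (rule Min_pairwise_dist_gt)
    fix i j assume "i \<in> {1..k}" "j \<in> {1..k}" "i \<noteq> j"
    moreover from this have "e i \<noteq> e j"
      using e by (metis bij_betw_iff_bijections)
    ultimately show "\<beta> < dist (hs i) (hs j)"
      using across[OF eP eP _ r r] by (simp add: hs_def)
  qed (use P(3) k_def in simp)
  have "\<bar>psi M act f h I - (\<Prod>B\<in>P. psi M act f h B)\<bar>
      = \<bar>(\<integral>x. (\<Prod>i\<in>{1..k}. hact act (hs i) (fs i) x) \<partial>M) - (\<Prod>i\<in>{1..k}. \<integral>x. fs i x \<partial>M)\<bar>"
    using integral_prod_hact_centred_prod[OF P(1,2) \<open>I \<noteq> {}\<close> e]
      prod_integral_centred_prod[OF P(1,2) e f] by (simp add: fs_def)
  also have "\<dots> \<le> E * exp (- \<delta> k * Min {dist (hs i) (hs j) | i j. i \<in> {1..k} \<and> j \<in> {1..k} \<and> i \<noteq> j})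
      * (\<Prod>i\<in>{1..k}. N t (fs i))"
    using E(1) fs unfolding mixing_bound_def k_def by blast
  also have "\<dots> \<le> E * exp (- \<delta> k * \<beta>) * X ^ card I"
  proof (intro mult_mono mult_left_mono)
    show "exp (- \<delta> k * Min {dist (hs i) (hs j) | i j. i \<in> {1..k} \<and> j \<in> {1..k} \<and> i \<noteq> j})
        \<le> exp (- \<delta> k * \<beta>)"
      using sep \<delta>_pos[of k] P(3) by (simp add: k_def)
    show "(\<Prod>i\<in>{1..k}. N t (fs i)) \<le> X ^ card I"
      unfolding fs_def hs_def using prod_N_centred_prod_le[OF P(1,2) e f \<open>1 \<le> t\<close> r within block] .
  qed (use E(2) fs N_nonneg[OF \<open>1 \<le> t\<close>] in \<open>auto intro: prod_nonneg\<close>)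
  finally show ?thesis
    by (simp add: k_def)
qed

lemma decay_bound_le:
  assumes "2 \<le> k" "k \<le> r" "n \<le> r" "1 \<le> s" "0 \<le> \<alpha>" "0 \<le> \<beta>" "1 \<le> C" "0 \<le> E" "0 \<le> y"
  shows "E * exp (- \<delta> k * \<beta>) * (C * exp (\<sigma> s * \<alpha>) * y) ^ n
    \<le> E * C ^ r * exp (- (\<beta> * \<delta> r - real r * \<alpha> * \<sigma> s)) * y ^ n"
proof -
  have "exp (- \<delta> k * \<beta>) \<le> exp (- \<delta> r * \<beta>)"
    using \<delta>_antimono[of k r] assms by (simp add: mult_right_mono)
  moreover have "C ^ n \<le> C ^ r"
    using assms by (intro power_increasing)
  moreover have "exp (\<sigma> s * \<alpha>) ^ n \<le> exp (real r * \<alpha> * \<sigma> s)"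
  proof -
    have "real n * (\<sigma> s * \<alpha>) \<le> real r * (\<sigma> s * \<alpha>)"
      using assms \<sigma>_pos[of s] by (intro mult_right_mono) auto
    then show ?thesis
      by (simp add: exp_of_nat_mult[symmetric] mult_ac)
  qed
  ultimately have "E * exp (- \<delta> k * \<beta>) * (C ^ n * exp (\<sigma> s * \<alpha>) ^ n) * y ^ n
      \<le> E * exp (- \<delta> r * \<beta>) * (C ^ r * exp (real r * \<alpha> * \<sigma> s)) * y ^ n"
    using assms by (intro mult_mono mult_left_mono) auto
  moreover have "exp (- (\<beta> * \<delta> r - real r * \<alpha> * \<sigma> s)) = exp (- \<delta> r * \<beta>) * exp (real r * \<alpha> * \<sigma> s)"
    by (simp add: exp_add[symmetric] algebra_simps)
  ultimately show ?thesis
    by (simp add: power_mult_distrib mult_ac)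
qed

lemma psi_sub_psiQ_le_of_constants:
  assumes Q: "partition_on {1..r} Q" and h: "h \<in> DeltaQ Q \<alpha> \<beta>" and f: "f \<in> A" and I: "I \<subseteq> {1..r}"
    and "0 \<le> \<alpha>" "\<alpha> < \<beta>" "1 \<le> t" "1 \<le> s"
    and E: "0 \<le> E" "\<forall>k\<in>{2..r}. mixing_bound k t E"
    and C: "1 \<le> C" "\<And>(S::nat set) c. finite S \<Longrightarrow> S \<noteq> {} \<Longrightarrow> card S \<le> r \<Longrightarrow> \<forall>i\<in>S. dist (c i) 0 \<le> \<alpha> \<Longrightarrow>
      N t (\<lambda>x. \<Prod>i\<in>S. hact act (c i) f x) \<le> (C * exp (\<sigma> s * \<alpha>) * N s f) ^ card S"
  shows "\<bar>psi M act f h I - psiQ M act f h Q I\<bar>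
    \<le> E * C ^ r * exp (- (\<beta> * \<delta> r - real r * \<alpha> * \<sigma> s)) * N s f ^ card I"
proof -
  define P where "P = (\<inter>) I ` Q - {{}}"
  have P: "partition_on I P"
    using partition_on_restrict[OF Q, of I] I by (simp add: P_def Int_absorb2)
  have "finite I"
    using finite_subset[OF I] by simp
  have "card I \<le> r"
    using card_mono[OF _ I] by simp
  have block: "N t (\<lambda>x. \<Prod>i\<in>B. hact act (c i) f x) \<le> (C * exp (\<sigma> s * \<alpha>) * N s f) ^ card B"
    if "B \<in> P" "\<forall>i\<in>B. dist (c i) 0 \<le> \<alpha>" for B c
  proof (rule C(2))
    have "B \<subseteq> I"
      using that(1) by (auto simp: P_def)
    then show "card B \<le> r"
      using card_mono[OF \<open>finite I\<close>] \<open>card I \<le> r\<close> by (meson order_trans)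
  qed (use partition_on_block[OF P \<open>finite I\<close> that(1)] that(2) in auto)
  have within: "dist (h i) (h j) \<le> \<alpha>" if "B \<in> P" "i \<in> B" "j \<in> B" for B i j
    using that unfolding P_def by (rule DeltaQ_restrict_dist(1)[OF h Q finite_atLeastAtMost])
  have across: "\<beta> < dist (h i) (h j)" if "B \<in> P" "B' \<in> P" "B \<noteq> B'" "i \<in> B" "j \<in> B'" for B B' i j
    using that unfolding P_def by (rule DeltaQ_restrict_dist(2)[OF h Q finite_atLeastAtMost])
  have "card P \<le> r"
    using card_partition_on_le[OF P \<open>finite I\<close>] \<open>card I \<le> r\<close> by simp
  have psiQ: "psiQ M act f h Q I = (\<Prod>B\<in>P. psi M act f h B)"
    using psiQ_eq_prod_restrict[OF Q] by (simp add: P_def)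
  show ?thesis
  proof (cases "card P \<le> 1")
    case True
    then have "psi M act f h I = psiQ M act f h Q I"
      using psi_eq_prod_if_card_le_1[OF P \<open>finite I\<close>] psiQ by simp
    then show ?thesis
      using E(1) C(1) N_nonneg[OF \<open>1 \<le> s\<close> f] by simp
  next
    case False
    then have "2 \<le> card P" "mixing_bound (card P) t E"
      using E(2) \<open>card P \<le> r\<close> by auto
    then have "\<bar>psi M act f h I - psiQ M act f h Q I\<bar>
        \<le> E * exp (- \<delta> (card P) * \<beta>) * (C * exp (\<sigma> s * \<alpha>) * N s f) ^ card I"
      unfolding psiQ using \<open>0 \<le> \<alpha>\<close> \<open>\<alpha> < \<beta>\<close>
      by (intro psi_sub_prod_psi_le[OF P \<open>finite I\<close> _ f \<open>1 \<le> t\<close> _ _ E(1) within across block]) auto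
    also have "\<dots> \<le> E * C ^ r * exp (- (\<beta> * \<delta> r - real r * \<alpha> * \<sigma> s)) * N s f ^ card I"
      using \<open>2 \<le> card P\<close> \<open>card P \<le> r\<close> \<open>card I \<le> r\<close> \<open>1 \<le> s\<close> \<open>0 \<le> \<alpha>\<close> \<open>\<alpha> < \<beta>\<close> C(1) E(1)
        N_nonneg[OF \<open>1 \<le> s\<close> f] by (intro decay_bound_le) auto
    finally show ?thesis .
  qed
qed

lemma psi_sub_psiQ_le:
  assumes "2 \<le> r" "sk r + r < s"
  shows "\<exists>C. \<forall>\<alpha> \<beta> Q h f I. 0 \<le> \<alpha> \<longrightarrow> \<alpha> < \<beta> \<longrightarrow> partition_on {1..r} Q \<longrightarrow>
      h \<in> DeltaQ Q \<alpha> \<beta> \<longrightarrow> f \<in> A \<longrightarrow> I \<subseteq> {1..r} \<longrightarrow>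
      \<bar>psi M act f h I - psiQ M act f h Q I\<bar>
        \<le> C * exp (- (\<beta> * \<delta> r - real r * \<alpha> * \<sigma> s)) * N s f ^ card I"
proof -
  define t where "t = Suc (sk r)"
  have "1 \<le> t" "1 \<le> s"
    using assms by (auto simp: t_def)
  obtain E where E: "E \<ge> 0" "\<forall>k\<in>{2..r}. mixing_bound k t E"
    using ex_uniform_mixing_bound[of r t] by (auto simp: t_def)
  obtain C where C: "C \<ge> 1" "\<forall>(S::nat set) c f \<alpha>. finite S \<longrightarrow> S \<noteq> {} \<longrightarrow> card S \<le> Suc (r - 1) \<longrightarrow> f \<in> A \<longrightarrow>
      (\<forall>i\<in>S. dist (c i) 0 \<le> \<alpha>) \<longrightarrow>
      N t (\<lambda>x. \<Prod>i\<in>S. hact act (c i) f x) \<le> (C * exp (\<sigma> s * \<alpha>) * N s f) ^ card S"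
    using N_prod_hact_le[of t "r - 1" s] assms by (auto simp: t_def)
  show ?thesis
    using assms(1) E C \<open>1 \<le> t\<close> \<open>1 \<le> s\<close>
    by (intro exI[of _ "E * C ^ r"] allI impI psi_sub_psiQ_le_of_constants) auto
qed

end

theorem lemma9p1:
  fixes M :: "'x measure"
    and act :: "'h::{group_add, metric_space, second_countable_topology} \<Rightarrow> 'x \<Rightarrow> 'x"
    and A :: "('x \<Rightarrow> real) set"
    and N :: "nat \<Rightarrow> ('x \<Rightarrow> real) \<Rightarrow> real"
    and \<sigma> :: "nat \<Rightarrow> real" and \<delta> :: "nat \<Rightarrow> real" and sk :: "nat \<Rightarrow> nat"
    and r s :: nat
  assumes
    \<comment> \<open>H: locally compact second countable topological group, left-invariant metric\<close>
    H_lc: "locally compact (UNIV :: 'h set)"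
    and H_plus_cont: "continuous_on UNIV (\<lambda>p::'h \<times> 'h. fst p + snd p)"
    and H_inv_cont: "continuous_on UNIV (\<lambda>g::'h. - g)"
    and d_leftinv: "\<And>g x y::'h. dist (g + x) (g + y) = dist x y"
    \<comment> \<open>measure-preserving action on a probability space\<close>
    and M_prob: "prob_space M"
    and act_zero: "\<And>x. x \<in> space M \<Longrightarrow> act 0 x = x"
    and act_plus: "\<And>g g' x. x \<in> space M \<Longrightarrow> act (g + g') x = act g (act g' x)"
    and act_meas: "(\<lambda>p. act (fst p) (snd p)) \<in> measurable (borel \<Otimes>\<^sub>M M) M"
    and act_mp: "\<And>g. act g \<in> measurable M M \<and> distr M M (act g) = M"
    \<comment> \<open>A: H-invariant subalgebra of L^infinity\<close>
    and A_Linf: "\<And>f. f \<in> A \<Longrightarrow> f \<in> borel_measurable M \<and> (\<exists>B. AE x in M. \<bar>f x\<bar> \<le> B)"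
    and A_zero: "(\<lambda>x. 0) \<in> A"
    and A_add: "\<And>f g. f \<in> A \<Longrightarrow> g \<in> A \<Longrightarrow> (\<lambda>x. f x + g x) \<in> A"
    and A_scale: "\<And>c f. f \<in> A \<Longrightarrow> (\<lambda>x. c * f x) \<in> A"
    and A_mult: "\<And>f g. f \<in> A \<Longrightarrow> g \<in> A \<Longrightarrow> (\<lambda>x. f x * g x) \<in> A"
    and A_inv: "\<And>g f. f \<in> A \<Longrightarrow> hact act g f \<in> A"
    \<comment> \<open>(N_s)_{s >= 1} seminorms on A\<close>
    and N_nonneg: "\<And>s f. 1 \<le> s \<Longrightarrow> f \<in> A \<Longrightarrow> 0 \<le> N s f"
    and N_triangle: "\<And>s f g. 1 \<le> s \<Longrightarrow> f \<in> A \<Longrightarrow> g \<in> A \<Longrightarrow>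
        N s (\<lambda>x. f x + g x) \<le> N s f + N s g"
    and N_homog: "\<And>s c f. 1 \<le> s \<Longrightarrow> f \<in> A \<Longrightarrow> N s (\<lambda>x. c * f x) = \<bar>c\<bar> * N s f"
    \<comment> \<open>properties of N_s, with constants depending only on s\<close>
    and N_mono: "\<And>s. 1 \<le> s \<Longrightarrow> \<exists>C. \<forall>f\<in>A. N s f \<le> C * N (s + 1) f"
    and N_Linf: "\<And>s. 1 \<le> s \<Longrightarrow> \<exists>C. \<forall>f\<in>A. AE x in M. \<bar>f x\<bar> \<le> C * N s f"
    and \<sigma>_pos: "\<And>s. 1 \<le> s \<Longrightarrow> 0 < \<sigma> s"
    and N_act: "\<And>s. 1 \<le> s \<Longrightarrow> \<exists>C. \<forall>f\<in>A. \<forall>g.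
        N s (hact act g f) \<le> C * exp (\<sigma> s * dist g 0) * N s f"
    and N_mult: "\<And>s. 1 \<le> s \<Longrightarrow> \<exists>C. \<forall>f1\<in>A. \<forall>f2\<in>A.
        N s (\<lambda>x. f1 x * f2 x) \<le> C * N (s + 1) f1 * N (s + 1) f2"
    \<comment> \<open>exponential mixing of all orders\<close>
    and \<delta>_pos: "\<And>k. 2 \<le> k \<Longrightarrow> 0 < \<delta> k"
    and sk_pos: "\<And>k. 2 \<le> k \<Longrightarrow> 0 < sk k"
    and mixing: "\<And>k s. 2 \<le> k \<Longrightarrow> sk k < s \<Longrightarrow> \<exists>C. \<forall>fs hs. (\<forall>i\<in>{1..k}. fs i \<in> A) \<longrightarrow>
        \<bar>(\<integral>x. (\<Prod>i\<in>{1..k}. hact act (hs i) (fs i) x) \<partial>M) - (\<Prod>i\<in>{1..k}. (\<integral>x. fs i x \<partial>M))\<bar>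
        \<le> C * exp (- \<delta> k * Min {dist (hs i) (hs j) | i j. i \<in> {1..k} \<and> j \<in> {1..k} \<and> i \<noteq> j})
            * (\<Prod>i\<in>{1..k}. N s (fs i))"
    and \<sigma>_mono: "\<And>s t. 1 \<le> s \<Longrightarrow> s \<le> t \<Longrightarrow> \<sigma> s \<le> \<sigma> t"
    and sk_mono: "\<And>k l. 2 \<le> k \<Longrightarrow> k \<le> l \<Longrightarrow> sk k \<le> sk l"
    and \<delta>_antimono: "\<And>k l. 2 \<le> k \<Longrightarrow> k \<le> l \<Longrightarrow> \<delta> l \<le> \<delta> k"
    and \<delta>_lt: "\<And>k s. 2 \<le> k \<Longrightarrow> 1 \<le> s \<Longrightarrow> \<delta> k < real k * \<sigma> s"
    \<comment> \<open>the data of the lemma\<close>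
    and r3: "3 \<le> r"
    and s_big: "sk r + r < s"
  shows "\<exists>C. \<forall>\<alpha> \<beta> Q h f I. 0 \<le> \<alpha> \<longrightarrow> \<alpha> < \<beta> \<longrightarrow> partition_on {1..r} Q \<longrightarrow>
      h \<in> DeltaQ Q \<alpha> \<beta> \<longrightarrow> f \<in> A \<longrightarrow> I \<subseteq> {1..r} \<longrightarrow>
      \<bar>psi M act f h I - psiQ M act f h Q I\<bar>
        \<le> C * exp (- (\<beta> * \<delta> r - real r * \<alpha> * \<sigma> s)) * N s f ^ card I"
proof -
  interpret exp_mixing_action A N act \<sigma> M \<delta> sk
    by unfold_locales (fact A_mult N_nonneg N_mono N_mult A_inv \<sigma>_pos \<sigma>_mono N_act d_leftinv act_plus
        act_mp \<delta>_pos \<delta>_antimono sk_mono mixing | use A_Linf in blast)+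
  show ?thesis
    using psi_sub_psiQ_le r3 s_big by simp
qed

end
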